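(* Let $R$ be an exchange ring in which $2$ is invertible, and let $a\in R$ be such that $a-a^3$ is regular. Then there is an isomorphism of right $R$-modules $(a-a^3)R\oplus r(a)\cong (a-a^3)R\oplus R/aR$.
   Context: All rings are associative with identity; modules are right modules. An element $x\in R$ is regular if $x=xyx$ for some $y\in R$. $R$ is an exchange ring if for every $x\in R$ there is an idempotent $e\in xR$ with $1-e\in(1-x)R$. $r(a)=\{x\in R: ax=0\}$. *)

theory Defs
  imports Main
begin

definition regular_elem :: "'a::ring_1 \<Rightarrow> bool" where
  "regular_elem x \<longleftrightarrow> (\<exists>y. x = x * y * x)"

definition rprinc :: "'a::ring_1 \<Rightarrow> 'a set" where
  "rprinc x = {x * r | r. True}"

definition exchange_ring :: "'a::ring_1 itself \<Rightarrow> bool" where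
  "exchange_ring _ \<longleftrightarrow>
     (\<forall>x::'a. \<exists>e. e * e = e \<and> e \<in> rprinc x \<and> 1 - e \<in> rprinc (1 - x))"

definition rann :: "'a::ring_1 \<Rightarrow> 'a set" where
  "rann a = {x. a * x = 0}"

(* the quotient module R/I for a right ideal I, as the set of cosets x + I *)
definition coset :: "'a::ring_1 set \<Rightarrow> 'a \<Rightarrow> 'a set" where
  "coset I x = {x + i | i. i \<in> I}"

definition quot :: "'a::ring_1 set \<Rightarrow> 'a set set" where
  "quot I = {coset I x | x. True}"

definition qadd :: "'a::ring_1 set \<Rightarrow> 'a set \<Rightarrow> 'a set" where
  "qadd A B = {u + v | u v. u \<in> A \<and> v \<in> B}"

definition qsmul :: "'a::ring_1 set \<Rightarrow> 'a set \<Rightarrow> 'a \<Rightarrow> 'a set" where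
  "qsmul I A r = {u * r + i | u i. u \<in> A \<and> i \<in> I}"

definition rmod_iso ::
  "'m set \<Rightarrow> ('m \<Rightarrow> 'm \<Rightarrow> 'm) \<Rightarrow> ('m \<Rightarrow> 'r \<Rightarrow> 'm) \<Rightarrow>
   'n set \<Rightarrow> ('n \<Rightarrow> 'n \<Rightarrow> 'n) \<Rightarrow> ('n \<Rightarrow> 'r \<Rightarrow> 'n) \<Rightarrow> ('m \<Rightarrow> 'n) \<Rightarrow> bool" where
  "rmod_iso M addM smulM N addN smulN f \<longleftrightarrow>
     bij_betw f M N \<and>
     (\<forall>x\<in>M. \<forall>y\<in>M. f (addM x y) = addN (f x) (f y)) \<and>
     (\<forall>x\<in>M. \<forall>r. f (smulM x r) = smulN (f x) r)"

definition rmod_isomorphic ::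
  "'m set \<Rightarrow> ('m \<Rightarrow> 'm \<Rightarrow> 'm) \<Rightarrow> ('m \<Rightarrow> 'r \<Rightarrow> 'm) \<Rightarrow>
   'n set \<Rightarrow> ('n \<Rightarrow> 'n \<Rightarrow> 'n) \<Rightarrow> ('n \<Rightarrow> 'r \<Rightarrow> 'n) \<Rightarrow> bool" where
  "rmod_isomorphic M addM smulM N addN smulN \<longleftrightarrow> (\<exists>f. rmod_iso M addM smulM N addN smulN f)"

end

theory Submission
  imports Defs
begin

(* Put P = 1 - a^2, so that w = a - a^3 = aP = Pa, and fix y with wyw = w. Both modules are
   isomorphic to PR. Since P fixes r(a) and wy fixes wR, the map (u, x) \<mapsto> x + Pyu identifies
   wR \<oplus> r(a) with PR, with inverse g \<mapsto> (ag, g - Py(ag)). The map g \<mapsto> (wyg, g + aR) identifies PR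
   with wR \<oplus> R/aR: its kernel lies in PR \<inter> aR \<subseteq> wR, on which wy is the identity. *)

definition right_ideal :: "'a::ring_1 set \<Rightarrow> bool" where
  "right_ideal I \<longleftrightarrow> 0 \<in> I \<and> (\<forall>x\<in>I. \<forall>y\<in>I. x + y \<in> I) \<and> (\<forall>x\<in>I. \<forall>r. x * r \<in> I)"

lemma right_ideal_rprinc: "right_ideal (rprinc a)"
proof -
  have "a * r + a * s = a * (r + s)" "a * r * t = a * (r * t)" "0 = a * 0" for r s t
    by (simp_all add: distrib_left mult.assoc)
  then show ?thesis unfolding right_ideal_def rprinc_def by blast
qed

lemma right_ideal_diff:
  assumes "right_ideal I" and "x \<in> I" and "z \<in> I"
  shows "x - z \<in> I"
proof -
  have "x + z * (- 1) \<in> I" using assms unfolding right_ideal_def by blast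
  then show ?thesis by simp
qed

lemma coset_subset:
  assumes "right_ideal I" and "x - z \<in> I"
  shows "coset I x \<subseteq> coset I z"
proof
  fix t assume "t \<in> coset I x"
  then obtain i where "i \<in> I" "t = z + ((x - z) + i)" unfolding coset_def by auto
  moreover have "(x - z) + i \<in> I" using assms \<open>i \<in> I\<close> unfolding right_ideal_def by blast
  ultimately show "t \<in> coset I z" unfolding coset_def by blast
qed

lemma coset_eq_iff:
  assumes "right_ideal I"
  shows "coset I x = coset I z \<longleftrightarrow> x - z \<in> I"
proof
  assume "coset I x = coset I z"
  moreover have "x \<in> coset I x" using assms unfolding right_ideal_def coset_def by force
  ultimately obtain i where "i \<in> I" "x = z + i" unfolding coset_def by auto
  then show "x - z \<in> I" by simp
next
  assume xz: "x - z \<in> I"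
  then have "(x - z) * (- 1) \<in> I" using assms unfolding right_ideal_def by blast
  then have "z - x \<in> I" by simp
  then show "coset I x = coset I z" using coset_subset[OF assms] xz by blast
qed

lemma qadd_coset:
  assumes "right_ideal I"
  shows "qadd (coset I x) (coset I z) = coset I (x + z)"
proof (rule set_eqI)
  have I: "0 \<in> I" "\<And>i j. i \<in> I \<Longrightarrow> j \<in> I \<Longrightarrow> i + j \<in> I"
    using assms unfolding right_ideal_def by auto
  fix t
  show "t \<in> qadd (coset I x) (coset I z) \<longleftrightarrow> t \<in> coset I (x + z)"
  proof
    assume "t \<in> qadd (coset I x) (coset I z)"
    then obtain i j where "i \<in> I" "j \<in> I" "t = (x + i) + (z + j)"
      unfolding qadd_def coset_def by auto
    then have "t = (x + z) + (i + j)" "i + j \<in> I" using I(2) by (auto simp: algebra_simps)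
    then show "t \<in> coset I (x + z)" unfolding coset_def by blast
  next
    assume "t \<in> coset I (x + z)"
    then obtain i where "i \<in> I" "t = (x + i) + (z + 0)" unfolding coset_def by (auto simp: algebra_simps)
    then show "t \<in> qadd (coset I x) (coset I z)" using I(1) unfolding qadd_def coset_def by blast
  qed
qed

lemma qsmul_coset:
  assumes "right_ideal I"
  shows "qsmul I (coset I x) r = coset I (x * r)"
proof (rule set_eqI)
  have I: "0 \<in> I" "\<And>i j. i \<in> I \<Longrightarrow> j \<in> I \<Longrightarrow> i + j \<in> I" "\<And>i r. i \<in> I \<Longrightarrow> i * r \<in> I"
    using assms unfolding right_ideal_def by auto
  fix t
  show "t \<in> qsmul I (coset I x) r \<longleftrightarrow> t \<in> coset I (x * r)"
  proof
    assume "t \<in> qsmul I (coset I x) r"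
    then obtain i j where "i \<in> I" "j \<in> I" "t = (x + i) * r + j"
      unfolding qsmul_def coset_def by auto
    then have "t = x * r + (i * r + j)" "i * r + j \<in> I" using I by (auto simp: algebra_simps)
    then show "t \<in> coset I (x * r)" unfolding coset_def by blast
  next
    assume "t \<in> coset I (x * r)"
    then obtain i where "i \<in> I" "t = (x + 0) * r + i" unfolding coset_def by auto
    then show "t \<in> qsmul I (coset I x) r" using I(1) unfolding qsmul_def coset_def by blast
  qed
qed

lemma rmod_iso_trans:
  assumes "rmod_iso M addM smulM N addN smulN f"
    and "rmod_iso N addN smulN K addK smulK g"
  shows "rmod_iso M addM smulM K addK smulK (g \<circ> f)"
proof -
  have "f x \<in> N" if "x \<in> M" for x
    using assms(1) that unfolding rmod_iso_def bij_betw_def by blast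
  then show ?thesis
    using assms unfolding rmod_iso_def by (auto intro: bij_betw_trans)
qed

lemma cube_diff_factor:
  fixes a :: "'a::ring_1"
  shows "a * (1 - a^2) = a - a^3" and "(1 - a^2) * a = a - a^3"
  by (simp_all add: algebra_simps power2_eq_square power3_eq_cube)

lemma regular_fixes_rprinc:
  assumes "w * y * w = w" and "u \<in> rprinc w"
  shows "w * y * u = u"
  using assms unfolding rprinc_def by (auto simp: mult.assoc[symmetric])

lemma rann_fixed:
  fixes a :: "'a::ring_1"
  assumes "x \<in> rann a"
  shows "(1 - a^2) * x = x"
  using assms unfolding rann_def by (simp add: algebra_simps power2_eq_square mult.assoc)

lemma rprinc_inter_subset:
  fixes a :: "'a::ring_1"
  shows "rprinc (1 - a^2) \<inter> rprinc a \<subseteq> rprinc (a - a^3)"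
proof
  fix d assume "d \<in> rprinc (1 - a^2) \<inter> rprinc a"
  then obtain c s where c: "d = (1 - a^2) * c" and s: "d = a * s" unfolding rprinc_def by blast
  have "d = (1 - a^2) * d + a * (a * d)" by (simp add: algebra_simps power2_eq_square)
  also have "(1 - a^2) * d = (a - a^3) * s"
    unfolding s by (simp add: mult.assoc[symmetric] cube_diff_factor)
  also have "a * (a * d) = (a - a^3) * (a * c)"
    unfolding c by (simp add: algebra_simps power2_eq_square power3_eq_cube)
  finally have "d = (a - a^3) * (s + a * c)" by (simp add: distrib_left)
  then show "d \<in> rprinc (a - a^3)" unfolding rprinc_def by blast
qed

lemma rmod_iso_prod_rann_onto_rprinc:
  fixes a y :: "'a::ring_1"
  assumes wyw: "(a - a^3) * y * (a - a^3) = a - a^3"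
  shows "rmod_iso
           (rprinc (a - a^3) \<times> rann a)
           (\<lambda>(u, x) (u', x'). (u + u', x + x'))
           (\<lambda>(u, x) r. (u * r, x * r))
           (rprinc (1 - a^2)) (+) (*)
           (\<lambda>(u, x). x + (1 - a^2) * y * u)"
proof -
  let ?w = "a - a^3" and ?P = "1 - a^2"
  define f where "f = (\<lambda>(u, x). x + ?P * y * u)"
  define h where "h = (\<lambda>g. (a * g, g - ?P * y * (a * g)))"
  have a_f: "a * f (u, x) = u" if "u \<in> rprinc ?w" "x \<in> rann a" for u x
    using that regular_fixes_rprinc[OF wyw] unfolding f_def rann_def
    by (simp add: distrib_left mult.assoc[symmetric] cube_diff_factor)
  have "f p \<in> rprinc ?P" if "p \<in> rprinc ?w \<times> rann a" for p
  proof -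
    obtain u x where p: "p = (u, x)" by (cases p)
    with that have "?P * x = x" by (simp add: rann_fixed)
    with p have "f p = ?P * (x + y * u)"
      unfolding f_def by (simp add: distrib_left mult.assoc)
    then show ?thesis unfolding rprinc_def by blast
  qed
  moreover have "h g \<in> rprinc ?w \<times> rann a" if g: "g \<in> rprinc ?P" for g
  proof -
    obtain c where "g = ?P * c" using g unfolding rprinc_def by blast
    then have ag: "a * g \<in> rprinc ?w"
      unfolding rprinc_def by (auto simp: mult.assoc[symmetric] cube_diff_factor)
    have "a * (g - ?P * y * (a * g)) = a * g - ?w * y * (a * g)"
      by (simp only: right_diff_distrib[of a g] mult.assoc[symmetric] cube_diff_factor(1))
    then have "g - ?P * y * (a * g) \<in> rann a"
      using regular_fixes_rprinc[OF wyw ag] unfolding rann_def by simp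
    then show ?thesis using ag unfolding h_def by simp
  qed
  moreover have "h (f p) = p" if "p \<in> rprinc ?w \<times> rann a" for p
    using that a_f unfolding h_def by (auto simp: f_def)
  moreover have "f (h g) = g" for g
    unfolding f_def h_def by simp
  ultimately have "bij_betw f (rprinc ?w \<times> rann a) (rprinc ?P)"
    by (intro bij_betw_byWitness[where f' = h] ballI image_subsetI) blast+
  moreover have "f (u + u', x + x') = f (u, x) + f (u', x')"
    and "f (u * r, x * r) = f (u, x) * r" for u u' x x' r
    unfolding f_def by (simp_all add: algebra_simps)
  ultimately show ?thesis unfolding rmod_iso_def f_def[symmetric] by auto
qed

lemma rmod_iso_rprinc_onto_prod_quot:
  fixes a y :: "'a::ring_1"
  assumes wyw: "(a - a^3) * y * (a - a^3) = a - a^3"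
  shows "rmod_iso
           (rprinc (1 - a^2)) (+) (*)
           (rprinc (a - a^3) \<times> quot (rprinc a))
           (\<lambda>(v, A) (v', A'). (v + v', qadd A A'))
           (\<lambda>(v, A) r. (v * r, qsmul (rprinc a) A r))
           (\<lambda>g. ((a - a^3) * y * g, coset (rprinc a) g))"
proof -
  let ?w = "a - a^3" and ?P = "1 - a^2"
  define f where "f = (\<lambda>g. (?w * y * g, coset (rprinc a) g))"
  have "inj_on f (rprinc ?P)"
  proof (rule inj_onI)
    fix g g' assume "g \<in> rprinc ?P" "g' \<in> rprinc ?P" "f g = f g'"
    then have "g - g' \<in> rprinc ?P" "g - g' \<in> rprinc a" and wy0: "?w * y * (g - g') = 0"
      using right_ideal_diff[OF right_ideal_rprinc]
      unfolding f_def by (simp_all add: coset_eq_iff[OF right_ideal_rprinc] right_diff_distrib)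
    then have "?w * y * (g - g') = g - g'"
      using rprinc_inter_subset regular_fixes_rprinc[OF wyw] by blast
    then show "g = g'" using wy0 by simp
  qed
  moreover have "f ` rprinc ?P = rprinc ?w \<times> quot (rprinc a)"
  proof
    show "f ` rprinc ?P \<subseteq> rprinc ?w \<times> quot (rprinc a)"
      unfolding f_def quot_def rprinc_def by (auto simp: mult.assoc)
  next
    show "rprinc ?w \<times> quot (rprinc a) \<subseteq> f ` rprinc ?P"
    proof
      fix q assume "q \<in> rprinc ?w \<times> quot (rprinc a)"
      then obtain t c where q: "q = (?w * t, coset (rprinc a) c)"
        unfolding rprinc_def quot_def by auto
      \<comment> \<open>Replace the \<open>wR\<close>-component \<open>wy(Pc)\<close> of \<open>Pc\<close> by \<open>wt\<close>; the change lies in \<open>aR\<close>.\<close>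
      define z where "z = ?P * c - ?w * y * (?P * c) + ?w * t"
      have "z = ?P * (c - a * y * (?P * c) + a * t)"
        unfolding z_def by (simp add: algebra_simps power2_eq_square power3_eq_cube)
      then have "z \<in> rprinc ?P" unfolding rprinc_def by blast
      have "?w * y * z = ?w * y * (?P * c) - (?w * y * ?w) * y * (?P * c) + (?w * y * ?w) * t"
        unfolding z_def by (simp add: algebra_simps)
      then have "?w * y * z = ?w * t" using wyw by simp
      moreover have "z - c = a * (- (a * c) - ?P * y * (?P * c) + ?P * t)"
        unfolding z_def by (simp add: algebra_simps power2_eq_square power3_eq_cube)
      then have "coset (rprinc a) z = coset (rprinc a) c"
        using coset_eq_iff[OF right_ideal_rprinc] unfolding rprinc_def by blast
      ultimately have "f z = q" unfolding f_def q by simp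
      then show "q \<in> f ` rprinc ?P" using \<open>z \<in> rprinc ?P\<close> by blast
    qed
  qed
  moreover have "f (g + g') = (\<lambda>(v, A) (v', A'). (v + v', qadd A A')) (f g) (f g')"
    and "f (g * r) = (\<lambda>(v, A) r. (v * r, qsmul (rprinc a) A r)) (f g) r" for g g' r
    unfolding f_def
    by (simp_all add: distrib_left mult.assoc qadd_coset qsmul_coset right_ideal_rprinc)
  ultimately show ?thesis unfolding rmod_iso_def bij_betw_def f_def[symmetric] by blast
qed

theorem lemma2p2:
  fixes a :: "'a::ring_1"
  assumes "exchange_ring TYPE('a)"
    and "\<exists>u::'a. 2 * u = 1 \<and> u * 2 = 1"
    and "regular_elem (a - a ^ 3)"
  shows "rmod_isomorphic
           (rprinc (a - a ^ 3) \<times> rann a)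
           (\<lambda>(x, y) (x', y'). (x + x', y + y'))
           (\<lambda>(x, y) r. (x * r, y * r))
           (rprinc (a - a ^ 3) \<times> quot (rprinc a))
           (\<lambda>(x, A) (x', A'). (x + x', qadd A A'))
           (\<lambda>(x, A) r. (x * r, qsmul (rprinc a) A r))"
proof -
  obtain y where wyw: "(a - a^3) * y * (a - a^3) = a - a^3"
    using assms(3) unfolding regular_elem_def by metis
  show ?thesis
    unfolding rmod_isomorphic_def
    using rmod_iso_trans[OF rmod_iso_prod_rann_onto_rprinc[OF wyw] rmod_iso_rprinc_onto_prod_quot[OF wyw]]
    by blast
qed

end
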